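(* Let ${\bf Q}_1,{\bf Q}_2$ be $d\times d$ positive definite matrices, ${\bf G}_i={\bf Q}_i^{-1/2}$, let $({\bf X}_1,{\bf X}_2)$ be a pair of $d$-dimensional real random vectors, ${\bf Z}_{11},{\bf Z}_{22}\sim\mathcal N({\bf 0},{\bf I}_d)$ independent of each other and of $({\bf X}_1,{\bf X}_2)$, and ${\bf Y}_{ii}={\bf G}_i{\bf X}_i+{\bf Z}_{ii}$, $i=1,2$. Then ${\bf Y}_{11},{\bf Y}_{22}$ are robustly $\epsilon$-dependent if and only if ${\bf X}_1,{\bf X}_2$ are robustly $\epsilon$-dependent.
   Context: Random vectors ${\bf U}_1,{\bf U}_2$ with joint characteristic function $f_{{\bf U}_1,{\bf U}_2}({\bf t}_1,{\bf t}_2)=\mathbb E[e^{j{\bf t}_1^T{\bf U}_1+j{\bf t}_2^T{\bf U}_2}]$ and marginal characteristic functions $f_{{\bf U}_i}$ ($j=\sqrt{-1}$) are robustly $\epsilon$-dependent if $|f_{{\bf U}_1,{\bf U}_2}({\bf t}_1,{\bf t}_2)-f_{{\bf U}_1}({\bf t}_1)f_{{\bf U}_2}({\bf t}_2)|\le\epsilon\,|f_{{\bf U}_1}({\bf t}_1)|\,|f_{{\bf U}_2}({\bf t}_2)|$ for all ${\bf t}_1,{\bf t}_2$. *)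

theory Defs
  imports "HOL-Probability.Probability"
begin

definition pos_def_mat :: "real^'n^'n \<Rightarrow> bool" where
  "pos_def_mat Q \<longleftrightarrow> transpose Q = Q \<and> (\<forall>x. x \<noteq> 0 \<longrightarrow> x \<bullet> (Q *v x) > 0)"

definition inv_sqrt_mat :: "real^'n^'n \<Rightarrow> real^'n^'n" where
  "inv_sqrt_mat Q = (THE G. pos_def_mat G \<and> G ** G = matrix_inv Q)"

definition char_fun :: "'a measure \<Rightarrow> ('a \<Rightarrow> real^'n) \<Rightarrow> real^'n \<Rightarrow> complex" where
  "char_fun M U t = (LINT \<omega>|M. cis (t \<bullet> U \<omega>))"

definition joint_char_fun ::
  "'a measure \<Rightarrow> ('a \<Rightarrow> real^'n) \<Rightarrow> ('a \<Rightarrow> real^'m) \<Rightarrow> real^'n \<Rightarrow> real^'m \<Rightarrow> complex" where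
  "joint_char_fun M U1 U2 t1 t2 = (LINT \<omega>|M. cis (t1 \<bullet> U1 \<omega> + t2 \<bullet> U2 \<omega>))"

definition robustly_dependent ::
  "'a measure \<Rightarrow> real \<Rightarrow> ('a \<Rightarrow> real^'n) \<Rightarrow> ('a \<Rightarrow> real^'m) \<Rightarrow> bool" where
  "robustly_dependent M \<epsilon> U1 U2 \<longleftrightarrow>
     (\<forall>t1 t2. cmod (joint_char_fun M U1 U2 t1 t2 - char_fun M U1 t1 * char_fun M U2 t2)
              \<le> \<epsilon> * cmod (char_fun M U1 t1) * cmod (char_fun M U2 t2))"

definition std_gaussian_vec :: "'a measure \<Rightarrow> ('a \<Rightarrow> real^'n) \<Rightarrow> bool" where
  "std_gaussian_vec M Z \<longleftrightarrow>
     distributed M lborel Z (\<lambda>x. ennreal (\<Prod>i\<in>UNIV. std_normal_density (x $ i)))"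

end

theory Submission
  imports Defs
begin

(* Adding independent Gaussian noise multiplies characteristic functions: as G_i is symmetric,
   the joint characteristic function of (Y11, Y22) at (t1, t2) is that of (X1, X2) at
   (G1 t1, G2 t2) times the nowhere vanishing factor exp (-(|t1|^2 + |t2|^2) / 2), and likewise
   for the marginals. Both sides of the inequality defining robust dependence therefore scale by
   the same positive factor, and (G1 t1, G2 t2) ranges over all pairs because G_i is invertible.
   That G_i = Q_i^(-1/2) is well defined, i.e. that a positive definite matrix has a unique
   positive definite square root, follows from the spectral theorem for self-adjoint operators. *)

lemma linear_coeff_eq_0_if_quadratic_nonpos:
  fixes b c :: real
  assumes "\<And>t. 2 * t * b + t\<^sup>2 * c \<le> 0"
  shows "b = 0"
proof (rule ccontr)
  assume "b \<noteq> 0"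
  define s where "s = 1 / (\<bar>c\<bar> + 1)"
  have s: "s > 0" "s * \<bar>c\<bar> < 1" unfolding s_def by (auto simp: field_simps)
  have "s * c \<ge> - (s * \<bar>c\<bar>)" using s by (simp add: abs_if mult_less_0_iff)
  then have "s * (2 + s * c) > 0" using s by simp
  moreover have "b\<^sup>2 > 0" using \<open>b \<noteq> 0\<close> by simp
  moreover have "b\<^sup>2 * (s * (2 + s * c)) \<le> 0"
    using assms[of "s * b"] by (simp add: power2_eq_square algebra_simps)
  ultimately show False by (metis mult_pos_pos not_le)
qed

lemma selfadjoint_eigenvector_in_invariant_subspace:
  fixes f :: "'a::euclidean_space \<Rightarrow> 'a"
  assumes lin: "linear f" and adj: "\<And>x y. f x \<bullet> y = x \<bullet> f y"
    and S: "subspace S" "S \<noteq> {0}" and inv: "f ` S \<subseteq> S"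
  shows "\<exists>u\<in>S. norm u = 1 \<and> f u = (u \<bullet> f u) *\<^sub>R u"
proof -
  let ?K = "S \<inter> sphere 0 1"
  obtain x where "x \<in> S" "x \<noteq> 0" using S subspace_0 by auto
  then have "x /\<^sub>R norm x \<in> ?K" using S(1) by (simp add: subspace_scale)
  then have "?K \<noteq> {}" by blast
  moreover have "compact ?K" using closed_subspace[OF S(1)] by (simp add: closed_Int_compact)
  moreover have "continuous_on ?K (\<lambda>x. x \<bullet> f x)"
    using lin by (intro continuous_intros linear_continuous_on) (simp add: linear_conv_bounded_linear)
  ultimately obtain u where "u \<in> ?K" and u_max: "\<And>y. y \<in> ?K \<Longrightarrow> y \<bullet> f y \<le> u \<bullet> f u"
    by (metis continuous_attains_sup)
  then have u: "u \<in> S" "norm u = 1" by auto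
  define l where "l = u \<bullet> f u"
  have rayleigh: "w \<bullet> f w \<le> l * (w \<bullet> w)" if "w \<in> S" for w
  proof (cases "w = 0")
    case False
    have "w /\<^sub>R norm w \<in> ?K" using that False S(1) by (simp add: subspace_scale)
    then have "(w /\<^sub>R norm w) \<bullet> f (w /\<^sub>R norm w) \<le> l" unfolding l_def by (rule u_max)
    then have "(w \<bullet> f w) / (norm w)\<^sup>2 \<le> l"
      by (simp add: linear_scale[OF lin] power2_eq_square divide_inverse ac_simps)
    then show ?thesis using False by (simp add: power2_norm_eq_inner field_simps)
  qed simp
  \<comment> \<open>u maximises the Rayleigh quotient on S, so its first variation in every direction
    v of S vanishes: f u - l u is orthogonal to S.\<close>
  define r where "r = f u - l *\<^sub>R u"
  have "r \<in> S" unfolding r_def using inv u(1) S(1) by (auto simp: subspace_diff subspace_scale)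
  moreover have "r \<bullet> v = 0" if "v \<in> S" for v
  proof (rule linear_coeff_eq_0_if_quadratic_nonpos)
    fix t
    have "u + t *\<^sub>R v \<in> S" using u(1) that S(1) by (simp add: subspace_add subspace_scale)
    moreover have "u \<bullet> u = 1" using u(2) by (simp add: norm_eq_1)
    moreover have "u \<bullet> f v = f u \<bullet> v" by (simp add: adj)
    ultimately show "2 * t * (r \<bullet> v) + t\<^sup>2 * (v \<bullet> f v - l * (v \<bullet> v)) \<le> 0"
      using rayleigh[of "u + t *\<^sub>R v"] unfolding r_def l_def
      by (simp add: linear_add[OF lin] linear_scale[OF lin] inner_add_left inner_add_right
          inner_diff_left inner_commute power2_eq_square algebra_simps)
  qed
  ultimately have "r = 0" using inner_eq_zero_iff by blast
  then show ?thesis using u unfolding r_def l_def by auto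
qed

lemma selfadjoint_orthonormal_eigenbasis_subspace:
  fixes f :: "'a::euclidean_space \<Rightarrow> 'a"
  assumes lin: "linear f" and adj: "\<And>x y. f x \<bullet> y = x \<bullet> f y"
  shows "subspace S \<Longrightarrow> f ` S \<subseteq> S \<Longrightarrow> \<exists>B\<subseteq>S. pairwise orthogonal B \<and>
    (\<forall>b\<in>B. norm b = 1 \<and> f b = (b \<bullet> f b) *\<^sub>R b) \<and> span B = S"
proof (induction "dim S" arbitrary: S rule: less_induct)
  case less
  show ?case
  proof (cases "S = {0}")
    case True
    then show ?thesis by (intro exI[of _ "{}"]) auto
  next
    case False
    obtain u where u: "u \<in> S" "norm u = 1" "f u = (u \<bullet> f u) *\<^sub>R u"
      using selfadjoint_eigenvector_in_invariant_subspace[OF lin adj less.prems(1) False less.prems(2)]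
      by blast
    define S' where "S' = {x \<in> S. u \<bullet> x = 0}"
    have "subspace S'" using less.prems(1) unfolding S'_def subspace_def
      by (auto simp: inner_add_right inner_scaleR_right)
    moreover have "f ` S' \<subseteq> S'"
    proof -
      have "u \<bullet> f x = 0" if "x \<in> S'" for x
        using that u(3) unfolding S'_def adj[symmetric]
        by (metis (mono_tags) inner_scaleR_left mem_Collect_eq mult_zero_right)
      then show ?thesis using less.prems(2) unfolding S'_def by auto
    qed
    moreover have "dim S' < dim S"
    proof (rule dim_psubset)
      have "u \<notin> S'" using u(2) unfolding S'_def by (auto simp: norm_eq_1)
      then have "S' \<subset> S" using u(1) unfolding S'_def by blast
      then show "span S' \<subset> span S"
        using \<open>subspace S'\<close> less.prems(1) by (metis span_eq_iff)
    qed
    ultimately obtain B' where B': "B' \<subseteq> S'" "pairwise orthogonal B'"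
      "\<forall>b\<in>B'. norm b = 1 \<and> f b = (b \<bullet> f b) *\<^sub>R b" "span B' = S'"
      using less.hyps by blast
    have "insert u B' \<subseteq> S" using B'(1) u(1) unfolding S'_def by auto
    moreover have "pairwise orthogonal (insert u B')"
      using B'(1,2) unfolding pairwise_insert S'_def orthogonal_def by (auto simp: inner_commute)
    moreover have "S \<subseteq> span (insert u B')"
    proof
      fix x assume "x \<in> S"
      then have "x - (u \<bullet> x) *\<^sub>R u \<in> S'" using u less.prems(1) unfolding S'_def
        by (auto simp: subspace_diff subspace_scale inner_diff_right norm_eq_1)
      then show "x \<in> span (insert u B')" using B'(4) by (auto simp: span_breakdown_eq)
    qed
    then have "span (insert u B') = S"
      using \<open>insert u B' \<subseteq> S\<close> less.prems(1) by (simp add: span_minimal subset_antisym)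
    ultimately show ?thesis using B'(3) u by (intro exI[of _ "insert u B'"]) auto
  qed
qed

lemma selfadjoint_orthonormal_eigenbasis:
  fixes f :: "'a::euclidean_space \<Rightarrow> 'a"
  assumes "linear f" and "\<And>x y. f x \<bullet> y = x \<bullet> f y"
  obtains B where "finite B" "pairwise orthogonal B" "span B = UNIV"
    "\<And>b. b \<in> B \<Longrightarrow> norm b = 1" "\<And>b. b \<in> B \<Longrightarrow> f b = (b \<bullet> f b) *\<^sub>R b"
  using selfadjoint_orthonormal_eigenbasis_subspace[OF assms subspace_UNIV]
  by (metis pairwise_orthogonal_imp_finite subset_UNIV)

lemma orthonormal_inner_sum:
  fixes B :: "'a::real_inner set"
  assumes "finite B" "pairwise orthogonal B" "\<And>b. b \<in> B \<Longrightarrow> norm b = 1" "c \<in> B"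
  shows "c \<bullet> (\<Sum>b\<in>B. g b *\<^sub>R b) = g c"
proof -
  have "c \<bullet> (\<Sum>b\<in>B. g b *\<^sub>R b) = (\<Sum>b\<in>B. g b * (c \<bullet> b))"
    by (simp add: inner_sum_right)
  also have "\<dots> = (\<Sum>b\<in>B. if b = c then g b else 0)"
    using assms(2-4) by (intro sum.cong) (auto simp: pairwise_def orthogonal_def norm_eq_1)
  finally show ?thesis using assms(1,4) by simp
qed

lemma symmetric_matrix_inner:
  fixes A :: "real^'n^'n"
  assumes "transpose A = A"
  shows "(A *v x) \<bullet> y = x \<bullet> (A *v y)"
  by (metis assms dot_lmul_matrix vector_transpose_matrix)

lemma matrix_outer_sum_mult:
  fixes B :: "(real^'n) set"
  shows "(\<chi> i j. \<Sum>b\<in>B. c b * b$i * b$j) *v x = (\<Sum>b\<in>B. (c b * (b \<bullet> x)) *\<^sub>R b)"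
  by (simp add: vec_eq_iff matrix_vector_mult_def inner_vec_def sum_distrib_left sum_distrib_right
      sum_component algebra_simps) (subst sum.swap, simp add: algebra_simps)

lemma invertible_matrix_inv:
  fixes A :: "'a::field^'n^'n"
  assumes "invertible A"
  shows "A ** matrix_inv A = mat 1" "matrix_inv A ** A = mat 1"
  using someI_ex[OF assms[unfolded invertible_def]] unfolding matrix_inv_def by auto

lemma pos_def_matD:
  assumes "pos_def_mat Q"
  shows "transpose Q = Q" and "x \<noteq> 0 \<Longrightarrow> 0 < x \<bullet> (Q *v x)"
  using assms unfolding pos_def_mat_def by auto

lemma pos_def_mat_inj:
  assumes "pos_def_mat Q"
  shows "inj ((*v) Q)"
  using pos_def_matD(2)[OF assms] by (metis inner_zero_right less_irrefl vec.inj_iff_eq_0)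

lemma pos_def_mat_surj:
  assumes "pos_def_mat Q"
  shows "surj ((*v) Q)"
  using pos_def_mat_inj[OF assms] matrix_vector_mul_linear by (rule eucl.linear_inj_imp_surj[rotated])

lemma pos_def_mat_invertible:
  assumes "pos_def_mat Q"
  shows "invertible Q"
  using pos_def_mat_inj[OF assms] by (simp add: invertible_left_inverse matrix_left_invertible_injective)

lemma pos_def_mat_matrix_inv:
  assumes "pos_def_mat Q"
  shows "pos_def_mat (matrix_inv Q)"
proof -
  define R where "R = matrix_inv Q"
  have QR: "Q ** R = mat 1" "R ** Q = mat 1"
    using invertible_matrix_inv[OF pos_def_mat_invertible[OF assms]] unfolding R_def by auto
  have "transpose R ** Q = mat 1"
    using QR(1) pos_def_matD(1)[OF assms] by (metis matrix_transpose_mul transpose_mat)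
  then have "transpose R = R" by (metis QR(1) matrix_mul_assoc matrix_mul_lid matrix_mul_rid)
  moreover have "x \<bullet> (R *v x) > 0" if "x \<noteq> 0" for x
  proof -
    have "x = Q *v (R *v x)" by (simp add: matrix_vector_mul_assoc QR)
    then have "R *v x \<noteq> 0" using that by auto
    then show ?thesis
      using pos_def_matD(2)[OF assms] \<open>x = Q *v (R *v x)\<close> by (metis inner_commute)
  qed
  ultimately show ?thesis unfolding pos_def_mat_def R_def by blast
qed

lemma pos_def_mat_sqrt_exists:
  fixes P :: "real^'n^'n"
  assumes "pos_def_mat P"
  obtains G where "pos_def_mat G" "G ** G = P"
proof -
  obtain B where fin: "finite B" and orth: "pairwise orthogonal B" and span: "span B = UNIV"
    and unit_norm: "\<And>b. b \<in> B \<Longrightarrow> norm b = 1"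
    and eig: "\<And>b. b \<in> B \<Longrightarrow> P *v b = (b \<bullet> (P *v b)) *\<^sub>R b"
    using selfadjoint_orthonormal_eigenbasis[OF matrix_vector_mul_linear]
      symmetric_matrix_inner[OF pos_def_matD(1)[OF assms]] by metis
  define lam where "lam b = b \<bullet> (P *v b)" for b
  have lam_pos: "lam b > 0" if "b \<in> B" for b
    using pos_def_matD(2)[OF assms] unit_norm[OF that] unfolding lam_def
    by (metis norm_zero zero_neq_one)
  have expand: "(\<Sum>b\<in>B. (x \<bullet> b) *\<^sub>R b) = x" for x
    using orthonormal_basis_expand[OF orth unit_norm _ fin] span by simp
  define G where "G = (\<chi> i j. \<Sum>b\<in>B. sqrt (lam b) * b$i * b$j)"
  have G: "G *v x = (\<Sum>b\<in>B. (sqrt (lam b) * (b \<bullet> x)) *\<^sub>R b)" for x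
    unfolding G_def by (rule matrix_outer_sum_mult)
  have "transpose G = G" unfolding G_def transpose_def by (simp add: vec_eq_iff algebra_simps)
  moreover have "x \<bullet> (G *v x) > 0" if "x \<noteq> 0" for x
  proof -
    have "\<exists>c\<in>B. c \<bullet> x \<noteq> 0"
    proof (rule ccontr)
      assume "\<not> ?thesis"
      then have "(\<Sum>b\<in>B. (x \<bullet> b) *\<^sub>R b) = 0" by (simp add: inner_commute)
      then show False using that expand[of x] by simp
    qed
    then obtain c where c: "c \<in> B" "c \<bullet> x \<noteq> 0" by blast
    have "x \<bullet> (G *v x) = (\<Sum>b\<in>B. sqrt (lam b) * (b \<bullet> x)\<^sup>2)"
      unfolding G by (simp add: inner_sum_right inner_commute power2_eq_square algebra_simps)
    also have "\<dots> > 0"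
    proof (rule sum_pos2[OF fin c(1)])
      show "0 < sqrt (lam c) * (c \<bullet> x)\<^sup>2" using c lam_pos[OF c(1)] by simp
      show "0 \<le> sqrt (lam b) * (b \<bullet> x)\<^sup>2" if "b \<in> B" for b using lam_pos[OF that] by simp
    qed
    finally show ?thesis .
  qed
  moreover have "G ** G = P"
  proof (subst matrix_eq, intro allI)
    fix x
    have "(G ** G) *v x = G *v (G *v x)" by (simp add: matrix_vector_mul_assoc)
    also have "\<dots> = (\<Sum>b\<in>B. (sqrt (lam b) * (b \<bullet> (G *v x))) *\<^sub>R b)" by (rule G)
    also have "\<dots> = (\<Sum>b\<in>B. (x \<bullet> b) *\<^sub>R (P *v b))"
    proof (rule sum.cong[OF refl])
      fix b assume b: "b \<in> B"
      have "b \<bullet> (G *v x) = sqrt (lam b) * (b \<bullet> x)" unfolding G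
        by (rule orthonormal_inner_sum[OF fin orth]) (use unit_norm b in auto)
      then show "(sqrt (lam b) * (b \<bullet> (G *v x))) *\<^sub>R b = (x \<bullet> b) *\<^sub>R (P *v b)"
        using lam_pos[OF b] eig[OF b] unfolding lam_def[symmetric]
        by (simp add: real_sqrt_mult_self mult.assoc[symmetric] inner_commute)
    qed
    also have "\<dots> = P *v (\<Sum>b\<in>B. (x \<bullet> b) *\<^sub>R b)"
      by (simp add: linear_sum[OF matrix_vector_mul_linear] matrix_vector_mult_scaleR)
    also have "\<dots> = P *v x" by (simp only: expand)
    finally show "(G ** G) *v x = P *v x" .
  qed
  ultimately show ?thesis using that[of G] unfolding pos_def_mat_def by simp
qed

lemma pos_def_mat_sqrt_unique:
  fixes G H :: "real^'n^'n"
  assumes G: "pos_def_mat G" and H: "pos_def_mat H" and eq: "G ** G = H ** H"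
  shows "G = H"
proof -
  define D where "D = G - H"
  have "transpose D = D" using pos_def_matD(1)[OF G] pos_def_matD(1)[OF H] unfolding D_def
    by (simp add: transpose_def vec_eq_iff)
  then obtain B where span: "span B = UNIV" and unit_norm: "\<And>b. b \<in> B \<Longrightarrow> norm b = 1"
    and eig: "\<And>b. b \<in> B \<Longrightarrow> D *v b = (b \<bullet> (D *v b)) *\<^sub>R b"
    using selfadjoint_orthonormal_eigenbasis[OF matrix_vector_mul_linear symmetric_matrix_inner]
    by metis
  have D_basis: "D *v v = 0" if "v \<in> B" for v
  proof -
    define \<mu> where "\<mu> = v \<bullet> (D *v v)"
    \<comment> \<open>G D + D H = G G - H H = 0; pairing with the eigenvector v of D gives
      \<mu> (v \<bullet> G v + v \<bullet> H v) = 0.\<close>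
    have "G *v (G *v v) = H *v (H *v v)" using eq by (metis matrix_vector_mul_assoc)
    then have "G *v (D *v v) + D *v (H *v v) = 0"
      unfolding D_def by (simp add: matrix_vector_mult_diff_distrib matrix_vector_mult_diff_rdistrib)
    then have "0 = v \<bullet> (G *v (D *v v)) + (D *v v) \<bullet> (H *v v)"
      by (metis inner_add_right inner_zero_right symmetric_matrix_inner \<open>transpose D = D\<close>)
    also have "\<dots> = \<mu> * (v \<bullet> (G *v v) + v \<bullet> (H *v v))"
      using eig[OF that] unfolding \<mu>_def[symmetric]
      by (simp add: matrix_vector_mult_scaleR algebra_simps)
    finally have "\<mu> = 0"
      using pos_def_matD(2)[OF G, of v] pos_def_matD(2)[OF H, of v] unit_norm[OF that] by force
    then show ?thesis using eig[OF that] unfolding \<mu>_def by simp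
  qed
  have "D *v x = 0" for x
    using linear_eq_0_on_span[OF matrix_vector_mul_linear D_basis] span by blast
  then show ?thesis unfolding D_def matrix_eq by (simp add: matrix_vector_mult_diff_rdistrib)
qed

lemma pos_def_mat_inv_sqrt_mat:
  assumes "pos_def_mat Q"
  shows "pos_def_mat (inv_sqrt_mat Q)"
proof -
  have "\<exists>!G. pos_def_mat G \<and> G ** G = matrix_inv Q"
    using pos_def_mat_sqrt_exists[OF pos_def_mat_matrix_inv[OF assms]] pos_def_mat_sqrt_unique
    by metis
  from theI'[OF this] show ?thesis unfolding inv_sqrt_mat_def by blast
qed

lemma integral_std_normal_density_cis:
  "(\<integral>y. std_normal_density y *\<^sub>R cis (a * y) \<partial>lborel) = complex_of_real (exp (- a\<^sup>2 / 2))"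
proof -
  have "char std_normal_distribution a = (\<integral>y. std_normal_density y *\<^sub>R iexp (a * y) \<partial>lborel)"
    unfolding char_def by (subst integral_density) auto
  then show ?thesis by (simp add: char_std_normal_distribution cis_conv_exp)
qed

lemma integrable_std_normal_density_cis:
  "integrable lborel (\<lambda>y. std_normal_density y *\<^sub>R cis (a * y))"
proof (rule Bochner_Integration.integrable_bound[OF integrable_normal_density[of 1 0]])
  show "(\<lambda>y. std_normal_density y *\<^sub>R cis (a * y)) \<in> borel_measurable lborel"
    unfolding normal_density_def cis_conv_exp by measurable
qed simp_all

lemma prod_vec_nth_eq_prod_Basis:
  fixes x :: "real^'n"
  shows "(\<Prod>i\<in>UNIV. f (x$i)) = (\<Prod>b\<in>Basis. f (x \<bullet> b))"
proof -
  have Basis: "(Basis :: (real^'n) set) = (\<lambda>i. axis i 1) ` UNIV" by (auto simp: Basis_vec_def)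
  have "inj (\<lambda>i::'n. axis i (1::real))" by (auto simp: inj_def axis_eq_axis)
  then show ?thesis unfolding Basis by (simp add: prod.reindex cart_eq_inner_axis)
qed

lemma cis_sum: "finite I \<Longrightarrow> cis (\<Sum>i\<in>I. f i) = (\<Prod>i\<in>I. cis (f i))"
  by (induction I rule: finite_induct) (auto simp: cis_mult[symmetric])

lemma char_fun_std_gaussian_vec:
  fixes Z :: "'a \<Rightarrow> real^'n"
  assumes "std_gaussian_vec M Z"
  shows "char_fun M Z t = complex_of_real (exp (- (norm t)\<^sup>2 / 2))"
proof -
  define g where "g x = (\<Prod>i\<in>UNIV. std_normal_density (x$i))" for x :: "real^'n"
  have dist: "distributed M lborel Z (\<lambda>x. ennreal (g x))"
    using assms unfolding std_gaussian_vec_def g_def by simp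
  have [measurable]: "Z \<in> borel_measurable M" using distributed_measurable[OF dist] by simp
  have [measurable]: "g \<in> borel_measurable lborel" unfolding g_def normal_density_def by measurable
  have [measurable]: "(\<lambda>x::real^'n. cis (t \<bullet> x)) \<in> borel_measurable borel"
    unfolding cis_conv_exp by measurable
  have "char_fun M Z t = integral\<^sup>L (distr M lborel Z) (\<lambda>x. cis (t \<bullet> x))"
    unfolding char_fun_def by (subst integral_distr) auto
  also have "\<dots> = integral\<^sup>L (density lborel (\<lambda>x. ennreal (g x))) (\<lambda>x. cis (t \<bullet> x))"
    using distributed_distr_eq_density[OF dist] by simp
  also have "\<dots> = (\<integral>x. g x *\<^sub>R cis (t \<bullet> x) \<partial>lborel)"
    by (subst integral_density) (auto simp: g_def prod_nonneg)
  also have "\<dots> = (\<integral>y. g (\<Sum>b\<in>Basis. y b *\<^sub>R b) *\<^sub>R cis (t \<bullet> (\<Sum>b\<in>Basis. y b *\<^sub>R b))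
                    \<partial>(\<Pi>\<^sub>M b\<in>Basis. lborel))"
    by (subst lborel_eq) (subst integral_distr, auto)
  also have "\<dots> = (\<integral>y. (\<Prod>b\<in>Basis. std_normal_density (y b) *\<^sub>R cis ((t \<bullet> b) * y b))
                    \<partial>(\<Pi>\<^sub>M b\<in>Basis. lborel))"
  proof (rule Bochner_Integration.integral_cong[OF refl])
    fix y :: "real^'n \<Rightarrow> real"
    define x where "x = (\<Sum>b\<in>Basis. y b *\<^sub>R b)"
    have x: "x \<bullet> b = y b" if "b \<in> Basis" for b
      unfolding x_def using that by (rule inner_sum_left_Basis)
    have "g x = (\<Prod>b\<in>Basis. std_normal_density (y b))"
      unfolding g_def prod_vec_nth_eq_prod_Basis by (intro prod.cong refl) (simp add: x)
    moreover have "t \<bullet> x = (\<Sum>b\<in>Basis. (t \<bullet> b) * y b)"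
      by (subst euclidean_inner) (intro sum.cong refl, simp add: x)
    ultimately show "g x *\<^sub>R cis (t \<bullet> x) =
        (\<Prod>b\<in>Basis. std_normal_density (y b) *\<^sub>R cis ((t \<bullet> b) * y b))"
      by (simp add: cis_sum scaleR_conv_of_real prod.distrib of_real_prod)
  qed
  also have "\<dots> = (\<Prod>b\<in>Basis. (\<integral>y. std_normal_density y *\<^sub>R cis ((t \<bullet> b) * y) \<partial>lborel))"
  proof -
    interpret product_sigma_finite "\<lambda>_::real^'n. lborel" by standard
    show ?thesis by (rule product_integral_prod) (auto intro: integrable_std_normal_density_cis)
  qed
  also have "\<dots> = (\<Prod>b\<in>Basis. complex_of_real (exp (- (t \<bullet> b)\<^sup>2 / 2)))"
    by (simp add: integral_std_normal_density_cis)
  also have "\<dots> = complex_of_real (exp (- (norm t)\<^sup>2 / 2))"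
  proof -
    have "(norm t)\<^sup>2 = (\<Sum>b\<in>Basis. (t \<bullet> b)\<^sup>2)"
      unfolding power2_norm_eq_inner by (subst euclidean_inner) (simp add: power2_eq_square)
    then show ?thesis
      by (simp add: exp_sum[symmetric] of_real_prod[symmetric] sum_negf sum_divide_distrib)
  qed
  finally show ?thesis .
qed

lemma joint_char_fun_zero_right [simp]: "joint_char_fun M U V t 0 = char_fun M U t"
  by (simp add: char_fun_def joint_char_fun_def)

lemma joint_char_fun_zero_left [simp]: "joint_char_fun M U V 0 t = char_fun M V t"
  by (simp add: char_fun_def joint_char_fun_def)

context prob_space
begin

lemma char_fun_zero [simp]: "char_fun M U 0 = 1"
  by (simp add: char_fun_def prob_space)

lemma integral_cis_add_indep:
  fixes U V :: "'a \<Rightarrow> 'b::topological_space"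
  assumes indep: "indep_var borel U borel V"
    and [measurable]: "\<phi> \<in> borel_measurable borel" "\<psi> \<in> borel_measurable borel"
  shows "(LINT \<omega>|M. cis (\<phi> (U \<omega>) + \<psi> (V \<omega>))) =
    (LINT \<omega>|M. cis (\<phi> (U \<omega>))) * (LINT \<omega>|M. cis (\<psi> (V \<omega>)))"
proof -
  have cis_measurable[measurable]:
    "(\<lambda>x. cis (\<phi> x)) \<in> borel_measurable borel" "(\<lambda>x. cis (\<psi> x)) \<in> borel_measurable borel"
    unfolding cis_conv_exp by measurable
  have [measurable]: "U \<in> borel_measurable M" "V \<in> borel_measurable M"
    using indep_var_rv1[OF indep] indep_var_rv2[OF indep] by auto
  have "integrable M (\<lambda>\<omega>. cis (\<phi> (U \<omega>)))" "integrable M (\<lambda>\<omega>. cis (\<psi> (V \<omega>)))"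
    by (auto intro!: integrable_const_bound[where B=1])
  with indep_var_compose[OF indep cis_measurable]
  show ?thesis by (auto simp: cis_mult[symmetric] comp_def dest: indep_var_lebesgue_integral)
qed

lemma joint_char_fun_indep:
  assumes "indep_var borel Z1 borel Z2"
  shows "joint_char_fun M Z1 Z2 t1 t2 = char_fun M Z1 t1 * char_fun M Z2 t2"
  unfolding joint_char_fun_def char_fun_def using assms
  by (rule integral_cis_add_indep) (auto intro: borel_measurable_continuous_onI continuous_intros)

lemma joint_char_fun_linear_add_indep:
  fixes X1 Z1 :: "'a \<Rightarrow> real^'n" and X2 Z2 :: "'a \<Rightarrow> real^'k"
    and A1 :: "real^'n^'n" and A2 :: "real^'k^'k"
  assumes "indep_var borel (\<lambda>\<omega>. (X1 \<omega>, X2 \<omega>)) borel (\<lambda>\<omega>. (Z1 \<omega>, Z2 \<omega>))"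
  shows "joint_char_fun M (\<lambda>\<omega>. A1 *v X1 \<omega> + Z1 \<omega>) (\<lambda>\<omega>. A2 *v X2 \<omega> + Z2 \<omega>) t1 t2 =
    joint_char_fun M X1 X2 (transpose A1 *v t1) (transpose A2 *v t2) * joint_char_fun M Z1 Z2 t1 t2"
proof -
  define \<phi> where "\<phi> p = (transpose A1 *v t1) \<bullet> fst p + (transpose A2 *v t2) \<bullet> snd p" for p
  define \<psi> where "\<psi> p = t1 \<bullet> fst p + t2 \<bullet> snd p" for p :: "(real^'n) \<times> (real^'k)"
  have "joint_char_fun M (\<lambda>\<omega>. A1 *v X1 \<omega> + Z1 \<omega>) (\<lambda>\<omega>. A2 *v X2 \<omega> + Z2 \<omega>) t1 t2 =
      (LINT \<omega>|M. cis (\<phi> (X1 \<omega>, X2 \<omega>) + \<psi> (Z1 \<omega>, Z2 \<omega>)))"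
    unfolding joint_char_fun_def \<phi>_def \<psi>_def
    by (simp add: inner_add_right dot_lmul_matrix algebra_simps)
  also have "\<dots> = (LINT \<omega>|M. cis (\<phi> (X1 \<omega>, X2 \<omega>))) * (LINT \<omega>|M. cis (\<psi> (Z1 \<omega>, Z2 \<omega>)))"
    using assms unfolding \<phi>_def \<psi>_def
    by (rule integral_cis_add_indep; intro borel_measurable_continuous_onI continuous_intros)
  finally show ?thesis unfolding joint_char_fun_def \<phi>_def \<psi>_def by simp
qed

end

lemma robustly_dependent_transform_iff:
  fixes U1 :: "'a \<Rightarrow> real^'n" and U2 :: "'a \<Rightarrow> real^'m"
    and V1 :: "'b \<Rightarrow> real^'k" and V2 :: "'b \<Rightarrow> real^'l"
  assumes joint: "\<And>t1 t2. joint_char_fun M U1 U2 t1 t2 =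
      joint_char_fun N V1 V2 (L1 t1) (L2 t2) * (p1 t1 * p2 t2)"
    and marg1: "\<And>t. char_fun M U1 t = char_fun N V1 (L1 t) * p1 t"
    and marg2: "\<And>t. char_fun M U2 t = char_fun N V2 (L2 t) * p2 t"
    and nz: "\<And>t. p1 t \<noteq> 0" "\<And>t. p2 t \<noteq> 0"
    and surj: "surj L1" "surj L2"
  shows "robustly_dependent M \<epsilon> U1 U2 \<longleftrightarrow> robustly_dependent N \<epsilon> V1 V2"
proof -
  define P where "P s1 s2 \<longleftrightarrow>
    cmod (joint_char_fun N V1 V2 s1 s2 - char_fun N V1 s1 * char_fun N V2 s2)
      \<le> \<epsilon> * cmod (char_fun N V1 s1) * cmod (char_fun N V2 s2)" for s1 s2
  have "cmod (joint_char_fun M U1 U2 t1 t2 - char_fun M U1 t1 * char_fun M U2 t2)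
      \<le> \<epsilon> * cmod (char_fun M U1 t1) * cmod (char_fun M U2 t2) \<longleftrightarrow> P (L1 t1) (L2 t2)" for t1 t2
  proof -
    define c where "c = cmod (p1 t1 * p2 t2)"
    have "joint_char_fun M U1 U2 t1 t2 - char_fun M U1 t1 * char_fun M U2 t2 =
        (joint_char_fun N V1 V2 (L1 t1) (L2 t2) - char_fun N V1 (L1 t1) * char_fun N V2 (L2 t2))
        * (p1 t1 * p2 t2)"
      unfolding joint marg1 marg2 by (simp add: algebra_simps)
    then have "cmod (joint_char_fun M U1 U2 t1 t2 - char_fun M U1 t1 * char_fun M U2 t2) =
        cmod (joint_char_fun N V1 V2 (L1 t1) (L2 t2) - char_fun N V1 (L1 t1) * char_fun N V2 (L2 t2))
          * c"
      unfolding c_def by (simp only: norm_mult)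
    moreover have "\<epsilon> * cmod (char_fun M U1 t1) * cmod (char_fun M U2 t2) =
        \<epsilon> * cmod (char_fun N V1 (L1 t1)) * cmod (char_fun N V2 (L2 t2)) * c"
      unfolding marg1 marg2 c_def by (simp add: norm_mult ac_simps)
    moreover have "c > 0" unfolding c_def using nz by simp
    ultimately show ?thesis unfolding P_def by (simp only: mult_le_cancel_right_pos)
  qed
  then have "robustly_dependent M \<epsilon> U1 U2 \<longleftrightarrow> (\<forall>t1 t2. P (L1 t1) (L2 t2))"
    unfolding robustly_dependent_def by simp
  also have "\<dots> \<longleftrightarrow> (\<forall>s1 s2. P s1 s2)" using surj by (metis surjD)
  finally show ?thesis unfolding robustly_dependent_def P_def .
qed

theorem lemma16:
  fixes M :: "'a measure"
    and Q1 Q2 :: "real^'d^'d"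
    and X1 X2 Z11 Z22 :: "'a \<Rightarrow> real^'d"
    and \<epsilon> :: real
  assumes "prob_space M"
    and "pos_def_mat Q1" and "pos_def_mat Q2"
    and "X1 \<in> borel_measurable M" and "X2 \<in> borel_measurable M"
    and "std_gaussian_vec M Z11" and "std_gaussian_vec M Z22"
    and "prob_space.indep_var M borel Z11 borel Z22"
    and "prob_space.indep_var M borel (\<lambda>\<omega>. (X1 \<omega>, X2 \<omega>)) borel (\<lambda>\<omega>. (Z11 \<omega>, Z22 \<omega>))"
  shows "robustly_dependent M \<epsilon>
           (\<lambda>\<omega>. inv_sqrt_mat Q1 *v X1 \<omega> + Z11 \<omega>) (\<lambda>\<omega>. inv_sqrt_mat Q2 *v X2 \<omega> + Z22 \<omega>)
         \<longleftrightarrow> robustly_dependent M \<epsilon> X1 X2"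
proof -
  interpret prob_space M by fact
  define G1 G2 where "G1 = inv_sqrt_mat Q1" and "G2 = inv_sqrt_mat Q2"
  have pd: "pos_def_mat G1" "pos_def_mat G2"
    unfolding G1_def G2_def using assms(2,3) by (simp_all add: pos_def_mat_inv_sqrt_mat)
  define Y1 Y2 where "Y1 \<omega> = G1 *v X1 \<omega> + Z11 \<omega>" and "Y2 \<omega> = G2 *v X2 \<omega> + Z22 \<omega>" for \<omega>
  have joint: "joint_char_fun M Y1 Y2 t1 t2 =
      joint_char_fun M X1 X2 (G1 *v t1) (G2 *v t2) * (char_fun M Z11 t1 * char_fun M Z22 t2)" for t1 t2
    using joint_char_fun_linear_add_indep[OF assms(9), of G1 G2] joint_char_fun_indep[OF assms(8)]
    unfolding Y1_def[abs_def] Y2_def[abs_def] pos_def_matD(1)[OF pd(1)] pos_def_matD(1)[OF pd(2)]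
    by simp
  have "char_fun M Y1 t = char_fun M X1 (G1 *v t) * char_fun M Z11 t"
    and "char_fun M Y2 t = char_fun M X2 (G2 *v t) * char_fun M Z22 t" for t
    using joint[of t 0] joint[of 0 t] by simp_all
  moreover have "char_fun M Z11 t \<noteq> 0" "char_fun M Z22 t \<noteq> 0" for t
    using assms(6,7) by (simp_all add: char_fun_std_gaussian_vec)
  ultimately show ?thesis
    using robustly_dependent_transform_iff[OF joint] pos_def_mat_surj[OF pd(1)]
      pos_def_mat_surj[OF pd(2)]
    unfolding Y1_def[abs_def] Y2_def[abs_def] G1_def G2_def by blast
qed

end
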